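(* Let $a<b$ and let $\mathbf{v}:[a,b]\to\mathbb{R}^n$ be continuously differentiable, and suppose $\mathbf{v}(t)=0$ for only finitely many $t\in[a,b]$. Then there exists a continuously differentiable function $\mu:[a,b]\to\mathbb{R}$ such that $|\mu(t)|=\|\mathbf{v}(t)\|_2$ for all $t\in[a,b]$.
   Context: $\|\cdot\|_2$ is the Euclidean norm on $\mathbb{R}^n$. *)

theory Defs
  imports "HOL-Analysis.Analysis"
begin

definition C1_on :: "real set \<Rightarrow> (real \<Rightarrow> 'a::real_normed_vector) \<Rightarrow> bool" where
  "C1_on S f \<longleftrightarrow> (\<exists>f'. (\<forall>t\<in>S. (f has_vector_derivative f' t) (at t within S))
                        \<and> continuous_on S f')"

end

theory Submission
  imports Defs
begin

text \<open>Away from the zeros of \<open>v\<close> the norm \<open>\<parallel>v\<parallel>\<close> is \<open>C\<^sup>1\<close> with derivative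
  \<open>\<langle>v, v'\<rangle> / \<parallel>v\<parallel>\<close>. Near a zero \<open>t\<^sub>0\<close> it behaves like \<open>\<bar>t - t\<^sub>0\<bar> \<parallel>v' t\<^sub>0\<parallel>\<close>, a corner
  that disappears once the sign is flipped at \<open>t\<^sub>0\<close>: \<open>sgn (t - t\<^sub>0) \<parallel>v t\<parallel>\<close> has derivative
  \<open>\<parallel>v' t\<^sub>0\<parallel>\<close> at \<open>t\<^sub>0\<close>, and \<open>sgn (t - t\<^sub>0) \<langle>v, v'\<rangle> / \<parallel>v\<parallel>\<close> tends to it because
  \<open>v t / (t - t\<^sub>0) \<rightarrow> v' t\<^sub>0\<close>. As the zeros are finitely many, the sign
  \<open>(-1)^#{zeros \<le> t}\<close> performs this flip at every zero and is locally constant elsewhere.\<close>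

lemma has_vector_derivative_imp_tendsto_difference_quotient:
  fixes f :: "real \<Rightarrow> 'a::real_normed_vector"
  assumes "(f has_vector_derivative f') (at x within S)"
  shows "((\<lambda>y. (f y - f x) /\<^sub>R (y - x)) \<longlongrightarrow> f') (at x within S)"
proof -
  have "((\<lambda>y. (f y - f x - (y - x) *\<^sub>R f') /\<^sub>R norm (y - x)) \<longlongrightarrow> 0) (at x within S)"
    using assms unfolding has_vector_derivative_def has_derivative_within
    by (simp add: divide_inverse_commute algebra_simps)
  then have "((\<lambda>y. norm ((f y - f x - (y - x) *\<^sub>R f') /\<^sub>R norm (y - x))) \<longlongrightarrow> 0) (at x within S)"
    by (rule tendsto_norm_zero)
  moreover have "norm ((f y - f x - (y - x) *\<^sub>R f') /\<^sub>R norm (y - x))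
      = norm ((f y - f x) /\<^sub>R (y - x) - f')" if "y \<noteq> x" for y
  proof -
    have "(f y - f x) /\<^sub>R (y - x) - f' = (f y - f x - (y - x) *\<^sub>R f') /\<^sub>R (y - x)"
      using that by (simp add: scaleR_diff_right)
    then show ?thesis
      by simp
  qed
  then have "eventually (\<lambda>y. norm ((f y - f x - (y - x) *\<^sub>R f') /\<^sub>R norm (y - x))
      = norm ((f y - f x) /\<^sub>R (y - x) - f')) (at x within S)"
    by (auto simp: eventually_at_filter)
  ultimately have "((\<lambda>y. norm ((f y - f x) /\<^sub>R (y - x) - f')) \<longlongrightarrow> 0) (at x within S)"
    by (rule Lim_transform_eventually)
  then show ?thesis
    by (simp add: Lim_null[of _ f'] tendsto_norm_zero_iff)
qed

lemma tendsto_inner_div_norm: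
  fixes w u :: "real \<Rightarrow> 'a::real_inner"
  assumes "(w \<longlongrightarrow> L) F" "(u \<longlongrightarrow> L) F"
  shows "((\<lambda>t. inner (w t) (u t) / norm (w t)) \<longlongrightarrow> norm L) F"
proof (cases "L = 0")
  case True
  have "\<forall>t. norm (inner (w t) (u t) / norm (w t)) \<le> norm (u t)"
  proof
    fix t
    show "norm (inner (w t) (u t) / norm (w t)) \<le> norm (u t)"
      using Cauchy_Schwarz_ineq2[of "w t" "u t"]
      by (cases "w t = 0") (simp_all add: divide_le_eq ac_simps)
  qed
  moreover have "((\<lambda>t. norm (u t)) \<longlongrightarrow> 0) F"
    using assms(2) True by (simp add: tendsto_norm_zero_iff)
  ultimately have "((\<lambda>t. inner (w t) (u t) / norm (w t)) \<longlongrightarrow> 0) F"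
    by (rule Lim_null_comparison[OF always_eventually])
  then show ?thesis
    using True by simp
next
  case False
  have "((\<lambda>t. inner (w t) (u t) / norm (w t)) \<longlongrightarrow> inner L L / norm L) F"
    using assms False by (intro tendsto_intros) auto
  then show ?thesis
    using False by (simp add: power2_norm_eq_inner[symmetric] power2_eq_square)
qed

lemma has_vector_derivative_norm:
  fixes v :: "real \<Rightarrow> 'a::real_inner"
  assumes "v t \<noteq> 0" and "(v has_vector_derivative v') (at t within S)"
  shows "((\<lambda>y. norm (v y)) has_vector_derivative inner (v t) v' / norm (v t)) (at t within S)"
proof -
  have "((norm \<circ> v) has_derivative (\<lambda>h. inner (h *\<^sub>R v') (sgn (v t)))) (at t within S)"
    using diff_chain_within[OF assms(2)[unfolded has_vector_derivative_def]
        has_derivative_at_withinI[OF has_derivative_norm[OF assms(1)]]]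
    by (simp add: o_def)
  then show ?thesis
    by (simp add: has_vector_derivative_def o_def sgn_div_norm inner_commute divide_inverse_commute ac_simps)
qed

lemma has_vector_derivative_sgn_mult_norm:
  fixes v :: "real \<Rightarrow> 'a::real_normed_vector"
  assumes "v t = 0" and "(v has_vector_derivative v') (at t within S)"
  shows "((\<lambda>y. sgn (y - t) * norm (v y)) has_vector_derivative norm v') (at t within S)"
proof -
  define g where "g y = sgn (y - t) * norm (v y)" for y
  have "((\<lambda>y. norm ((v y - v t) /\<^sub>R (y - t))) \<longlongrightarrow> norm v') (at t within S)"
    by (intro tendsto_norm has_vector_derivative_imp_tendsto_difference_quotient assms(2))
  moreover have "norm ((v y - v t) /\<^sub>R (y - t)) = (g y - g t) / (y - t)" if "y \<noteq> t" for y
    using that assms(1) by (cases "y < t") (simp_all add: g_def field_simps)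
  then have "eventually (\<lambda>y. norm ((v y - v t) /\<^sub>R (y - t)) = (g y - g t) / (y - t)) (at t within S)"
    by (auto simp: eventually_at_filter)
  ultimately have "((\<lambda>y. (g y - g t) / (y - t)) \<longlongrightarrow> norm v') (at t within S)"
    by (rule Lim_transform_eventually)
  then show ?thesis
    unfolding g_def[abs_def]
    by (simp add: has_real_derivative_iff_has_vector_derivative[symmetric] has_field_derivative_iff)
qed

lemma tendsto_sgn_mult_inner_div_norm:
  fixes v v' :: "real \<Rightarrow> 'a::real_inner"
  assumes "v t = 0" and "(v has_vector_derivative v' t) (at t within S)"
    and "(v' \<longlongrightarrow> v' t) (at t within S)"
  shows "((\<lambda>y. sgn (y - t) * (inner (v y) (v' y) / norm (v y))) \<longlongrightarrow> norm (v' t)) (at t within S)"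
proof -
  define w where "w y = (v y - v t) /\<^sub>R (y - t)" for y
  have "((\<lambda>y. inner (w y) (v' y) / norm (w y)) \<longlongrightarrow> norm (v' t)) (at t within S)"
    unfolding w_def
    by (intro tendsto_inner_div_norm has_vector_derivative_imp_tendsto_difference_quotient assms)
  moreover have "inner (w y) (v' y) / norm (w y) = sgn (y - t) * (inner (v y) (v' y) / norm (v y))"
    if "y \<noteq> t" for y
  proof -
    have v_eq: "v y = (y - t) *\<^sub>R w y"
      using that assms(1) by (simp add: w_def)
    have "sgn (y - t) * (inner (v y) (v' y) / norm (v y))
        = (sgn (y - t) * (y - t) / \<bar>y - t\<bar>) * (inner (w y) (v' y) / norm (w y))"
      by (simp add: v_eq)
    also have "sgn (y - t) * (y - t) / \<bar>y - t\<bar> = 1"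
      using that by (cases "y < t") auto
    finally show ?thesis
      by simp
  qed
  then have "eventually (\<lambda>y. inner (w y) (v' y) / norm (w y)
      = sgn (y - t) * (inner (v y) (v' y) / norm (v y))) (at t within S)"
    by (auto simp: eventually_at_filter)
  ultimately show ?thesis
    by (rule Lim_transform_eventually)
qed

definition zero_crossing_sign :: "real set \<Rightarrow> real \<Rightarrow> real" where
  "zero_crossing_sign Z t = (-1) ^ card {z \<in> Z. z \<le> t}"

lemma abs_zero_crossing_sign [simp]: "\<bar>zero_crossing_sign Z t\<bar> = 1"
  by (simp add: zero_crossing_sign_def)

lemma zero_crossing_sign_near:
  assumes "finite Z"
  obtains d where "d > 0"
    and "\<And>y. y \<in> Z \<Longrightarrow> dist y t < d \<Longrightarrow> y = t"
    and "\<And>y. dist y t < d \<Longrightarrow> zero_crossing_sign Z y =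
           (if y < t \<and> t \<in> Z then - zero_crossing_sign Z t else zero_crossing_sign Z t)"
proof -
  obtain d where "d > 0" and d: "\<forall>z\<in>Z. z \<noteq> t \<longrightarrow> d \<le> dist t z"
    using finite_set_avoid[OF assms] by blast
  have isolated: "y = t" if "y \<in> Z" "dist y t < d" for y
    using d that by (auto simp: dist_commute)
  have sign: "zero_crossing_sign Z y =
      (if y < t \<and> t \<in> Z then - zero_crossing_sign Z t else zero_crossing_sign Z t)"
    if "dist y t < d" for y
  proof -
    have "z = t" if "z \<in> Z" "y < z" "z \<le> t" for z
      using isolated[OF that(1)] that \<open>dist y t < d\<close> by (simp add: dist_real_def)
    moreover have "z = t" if "z \<in> Z" "t \<le> z" "z \<le> y" for z
      using isolated[OF that(1)] that \<open>dist y t < d\<close> by (simp add: dist_real_def)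
    ultimately have "{z \<in> Z. z \<le> t}
        = (if y < t \<and> t \<in> Z then insert t {z \<in> Z. z \<le> y} else {z \<in> Z. z \<le> y})"
      by (auto simp: not_le) fastforce+
    then show ?thesis
      using assms by (auto simp: zero_crossing_sign_def)
  qed
  show ?thesis
    using \<open>d > 0\<close> isolated sign by (rule that)
qed

definition signed_norm :: "real set \<Rightarrow> (real \<Rightarrow> 'a::real_normed_vector) \<Rightarrow> real \<Rightarrow> real" where
  "signed_norm S v t = zero_crossing_sign {s \<in> S. v s = 0} t * norm (v t)"

definition signed_norm_derivative ::
    "real set \<Rightarrow> (real \<Rightarrow> 'a::real_inner) \<Rightarrow> (real \<Rightarrow> 'a) \<Rightarrow> real \<Rightarrow> real" where
  "signed_norm_derivative S v v' t = zero_crossing_sign {s \<in> S. v s = 0} t *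
     (if v t = 0 then norm (v' t) else inner (v t) (v' t) / norm (v t))"

lemma abs_signed_norm [simp]: "\<bar>signed_norm S v t\<bar> = norm (v t)"
  by (simp add: signed_norm_def abs_mult)

lemma has_vector_derivative_signed_norm:
  fixes v v' :: "real \<Rightarrow> 'a::real_inner"
  assumes fin: "finite {s \<in> S. v s = 0}" and "t \<in> S"
    and deriv: "(v has_vector_derivative v' t) (at t within S)"
  shows "(signed_norm S v has_vector_derivative signed_norm_derivative S v v' t) (at t within S)"
proof -
  let ?\<sigma> = "zero_crossing_sign {s \<in> S. v s = 0}"
  obtain d where "d > 0" and "\<And>y. y \<in> {s \<in> S. v s = 0} \<Longrightarrow> dist y t < d \<Longrightarrow> y = t"
    and sign: "\<And>y. dist y t < d \<Longrightarrow>
      ?\<sigma> y = (if y < t \<and> t \<in> {s \<in> S. v s = 0} then - ?\<sigma> t else ?\<sigma> t)"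
    using zero_crossing_sign_near[OF fin, where t = t] by blast
  show ?thesis
  proof (cases "v t = 0")
    case True
    have "((\<lambda>y. ?\<sigma> t * (sgn (y - t) * norm (v y))) has_vector_derivative ?\<sigma> t * norm (v' t))
        (at t within S)"
      by (intro has_vector_derivative_mult_right has_vector_derivative_sgn_mult_norm True deriv)
    moreover have "?\<sigma> t * (sgn (y - t) * norm (v y)) = signed_norm S v y"
      if "y \<in> S" "dist y t < d" for y
      using sign[OF that(2)] True \<open>t \<in> S\<close> by (cases y t rule: linorder_cases) (auto simp: signed_norm_def)
    ultimately have "(signed_norm S v has_vector_derivative ?\<sigma> t * norm (v' t)) (at t within S)"
      by (rule has_vector_derivative_transform_within[OF _ \<open>d > 0\<close> \<open>t \<in> S\<close>])
    then show ?thesis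
      using True by (simp add: signed_norm_derivative_def)
  next
    case False
    have "((\<lambda>y. ?\<sigma> t * norm (v y)) has_vector_derivative ?\<sigma> t * (inner (v t) (v' t) / norm (v t)))
        (at t within S)"
      by (intro has_vector_derivative_mult_right has_vector_derivative_norm False deriv)
    moreover have "?\<sigma> t * norm (v y) = signed_norm S v y" if "y \<in> S" "dist y t < d" for y
      using sign[OF that(2)] False by (simp add: signed_norm_def)
    ultimately have "(signed_norm S v has_vector_derivative ?\<sigma> t * (inner (v t) (v' t) / norm (v t)))
        (at t within S)"
      by (rule has_vector_derivative_transform_within[OF _ \<open>d > 0\<close> \<open>t \<in> S\<close>])
    then show ?thesis
      using False by (simp add: signed_norm_derivative_def)
  qed
qed

lemma continuous_signed_norm_derivative:
  fixes v v' :: "real \<Rightarrow> 'a::real_inner"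
  assumes fin: "finite {s \<in> S. v s = 0}" and "t \<in> S"
    and deriv: "(v has_vector_derivative v' t) (at t within S)"
    and cont: "continuous (at t within S) v'"
  shows "continuous (at t within S) (signed_norm_derivative S v v')"
proof -
  let ?\<sigma> = "zero_crossing_sign {s \<in> S. v s = 0}"
  obtain d where "d > 0" and isolated: "\<And>y. y \<in> {s \<in> S. v s = 0} \<Longrightarrow> dist y t < d \<Longrightarrow> y = t"
    and sign: "\<And>y. dist y t < d \<Longrightarrow>
      ?\<sigma> y = (if y < t \<and> t \<in> {s \<in> S. v s = 0} then - ?\<sigma> t else ?\<sigma> t)"
    using zero_crossing_sign_near[OF fin, where t = t] by blast
  have near: "eventually (\<lambda>y. y \<in> S \<and> y \<noteq> t \<and> dist y t < d) (at t within S)"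
    using \<open>d > 0\<close> by (auto simp: eventually_at)
  show ?thesis
    unfolding continuous_within
  proof (cases "v t = 0")
    case True
    have "((\<lambda>y. ?\<sigma> t * (sgn (y - t) * (inner (v y) (v' y) / norm (v y)))) \<longlongrightarrow> ?\<sigma> t * norm (v' t))
        (at t within S)"
      using cont unfolding continuous_within
      by (intro tendsto_mult_left tendsto_sgn_mult_inner_div_norm True deriv)
    moreover have "eventually (\<lambda>y. ?\<sigma> t * (sgn (y - t) * (inner (v y) (v' y) / norm (v y)))
        = signed_norm_derivative S v v' y) (at t within S)"
      using near
    proof eventually_elim
      case (elim y)
      then have "v y \<noteq> 0"
        using isolated by blast
      then show ?case
        using sign[of y] elim True \<open>t \<in> S\<close>
        by (cases y t rule: linorder_cases) (auto simp: signed_norm_derivative_def)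
    qed
    ultimately show "(signed_norm_derivative S v v' \<longlongrightarrow> signed_norm_derivative S v v' t) (at t within S)"
      using True by (auto simp: signed_norm_derivative_def intro: Lim_transform_eventually)
  next
    case False
    have "(v \<longlongrightarrow> v t) (at t within S)"
      using has_vector_derivative_continuous[OF deriv] by (simp add: continuous_within)
    then have lim: "((\<lambda>y. ?\<sigma> t * (inner (v y) (v' y) / norm (v y)))
        \<longlongrightarrow> ?\<sigma> t * (inner (v t) (v' t) / norm (v t))) (at t within S)"
      and nonzero: "eventually (\<lambda>y. v y \<noteq> 0) (at t within S)"
      using cont False unfolding continuous_within by (auto intro!: tendsto_intros tendsto_imp_eventually_ne)
    have "eventually (\<lambda>y. ?\<sigma> t * (inner (v y) (v' y) / norm (v y))
        = signed_norm_derivative S v v' y) (at t within S)"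
      using nonzero near by eventually_elim (use sign False in \<open>auto simp: signed_norm_derivative_def\<close>)
    with lim show "(signed_norm_derivative S v v' \<longlongrightarrow> signed_norm_derivative S v v' t) (at t within S)"
      using False by (auto simp: signed_norm_derivative_def intro: Lim_transform_eventually)
  qed
qed

lemma C1_on_signed_norm:
  fixes v v' :: "real \<Rightarrow> 'a::real_inner"
  assumes fin: "finite {s \<in> S. v s = 0}"
    and deriv: "\<And>t. t \<in> S \<Longrightarrow> (v has_vector_derivative v' t) (at t within S)"
    and cont: "continuous_on S v'"
  shows "C1_on S (signed_norm S v)"
proof -
  have "\<forall>t\<in>S. (signed_norm S v has_vector_derivative signed_norm_derivative S v v' t) (at t within S)"
    using has_vector_derivative_signed_norm[OF fin] deriv by blast
  moreover have "continuous_on S (signed_norm_derivative S v v')"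
    using continuous_signed_norm_derivative[OF fin] deriv cont
    by (simp add: continuous_on_eq_continuous_within)
  ultimately show ?thesis
    unfolding C1_on_def by blast
qed

theorem mainTheorem3:
  fixes a b :: real and v :: "real \<Rightarrow> real ^ 'n"
  assumes "a < b"
    and "C1_on {a..b} v"
    and "finite {t \<in> {a..b}. v t = 0}"
  shows "\<exists>\<mu> :: real \<Rightarrow> real. C1_on {a..b} \<mu> \<and> (\<forall>t\<in>{a..b}. \<bar>\<mu> t\<bar> = norm (v t))"
proof -
  obtain v' where "\<And>t. t \<in> {a..b} \<Longrightarrow> (v has_vector_derivative v' t) (at t within {a..b})"
    and "continuous_on {a..b} v'"
    using assms(2) unfolding C1_on_def by blast
  then have "C1_on {a..b} (signed_norm {a..b} v)"
    using assms(3) by (intro C1_on_signed_norm)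
  then show ?thesis
    by (intro exI[of _ "signed_norm {a..b} v"]) simp
qed

end
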